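(* Let $A\in\mathcal{O}(\mathrm{S}^2_q)$ act on $\mathcal{H}$ via the Dąbrowski–Sitarz representation and let $M:=L^2K^2$. Then the operator $A_0:=(A-M)L^{-1}$, defined on the span of the basis vectors, extends to a bounded operator on $\mathcal{H}$; i.e. there is a bounded operator $A_0$ with $A=M+A_0L$.
   Context: Fix $q\in(0,1)$, $[n]_q=(q^n-q^{-n})/(q-q^{-1})$. $\mathcal{H}=\mathcal{H}_-\oplus\mathcal{H}_+$ has orthonormal basis $v^l_{k,\pm}\in\mathcal{H}_\pm$, $l\in\{\frac12,\frac32,\dots\}$, $k\in\{-l,\dots,l\}$; $Lv^l_{k,\pm}=q^lv^l_{k,\pm}$, $Kv^l_{k,\pm}=q^kv^l_{k,\pm}$. The generator $A$ of the Podleś sphere acts by $A=(1-x_0)/(1+q^2)$, where $x_0v^l_{k,\pm}=\alpha^-_0(l,k)_\pm v^{l-1}_{k,\pm}+\alpha^0_0(l,k)_\pm v^l_{k,\pm}+\alpha^+_0(l,k)_\pm v^{l+1}_{k,\pm}$ (with $v^{1/2-1}_{k,\pm}:=0$ and $\alpha^-_0(l,k)_\pm=0$ when $|k|>l-1$), and $\alpha^-_0(l,k)_\pm=\frac{q^{k\pm1/2}[2]_q[l-k]_q^{1/2}[l+k]_q^{1/2}[l-1/2]_q^{1/2}[l+1/2]_q^{1/2}}{[2l-1]_q^{1/2}[2l]_q[2l+1]_q^{1/2}}$, $\alpha^+_0(l,k)_\pm=\alpha^-_0(l+1,k)_\pm$, $\alpha^0_0(l,k)_\pm=[2l]_q^{-1}([l-k+1]_q[l+k]_q-q^2[l-k]_q[l+k+1]_q)\beta_\pm(l)$,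 with $\beta_\pm(l)=\frac{\pm q^{\mp1}+(q-q^{-1})([1/2]_q[3/2]_q-[l]_q[l+1]_q)}{q[2l+2]_q}$. *)

theory Defs
  imports Complex_Main
begin

text \<open>Basis index (s, l, k) of v^l_{k,s}: s = True for the '+' summand, False for '-'.\<close>
type_synonym idx = "bool \<times> real \<times> real"

definition valid_idx :: "idx \<Rightarrow> bool" where
  "valid_idx i = (case i of (s, l, k) \<Rightarrow>
     (\<exists>n::nat. l = real n + 1/2) \<and> (\<exists>m::int. k = real_of_int m + 1/2) \<and> \<bar>k\<bar> \<le> l)"

definition lev :: "idx \<Rightarrow> real" where "lev i = fst (snd i)"

definition qnum :: "real \<Rightarrow> real \<Rightarrow> real" where
  "qnum q x = (q powr x - q powr (-x)) / (q - 1/q)"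

definition sgn_of :: "bool \<Rightarrow> real" where "sgn_of s = (if s then 1 else -1)"

definition alpha_minus :: "real \<Rightarrow> bool \<Rightarrow> real \<Rightarrow> real \<Rightarrow> real" where
  "alpha_minus q s l k = (if \<bar>k\<bar> > l - 1 then 0 else
     q powr (k + sgn_of s / 2) * qnum q 2 * sqrt (qnum q (l - k)) * sqrt (qnum q (l + k))
       * sqrt (qnum q (l - 1/2)) * sqrt (qnum q (l + 1/2))
     / (sqrt (qnum q (2*l - 1)) * qnum q (2*l) * sqrt (qnum q (2*l + 1))))"

definition alpha_plus :: "real \<Rightarrow> bool \<Rightarrow> real \<Rightarrow> real \<Rightarrow> real" where
  "alpha_plus q s l k = alpha_minus q s (l + 1) k"

definition beta :: "real \<Rightarrow> bool \<Rightarrow> real \<Rightarrow> real" where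
  "beta q s l = (sgn_of s * q powr (- sgn_of s)
       + (q - 1/q) * (qnum q (1/2) * qnum q (3/2) - qnum q l * qnum q (l + 1)))
     / (q * qnum q (2*l + 2))"

definition alpha_zero :: "real \<Rightarrow> bool \<Rightarrow> real \<Rightarrow> real \<Rightarrow> real" where
  "alpha_zero q s l k = (qnum q (l - k + 1) * qnum q (l + k) - q\<^sup>2 * qnum q (l - k) * qnum q (l + k + 1))
     / qnum q (2*l) * beta q s l"

text \<open>Matrix entries: mat i j = coefficient of basis vector i in (operator applied to basis vector j).\<close>
definition x0_mat :: "real \<Rightarrow> idx \<Rightarrow> idx \<Rightarrow> real" where
  "x0_mat q i j = (case i of (s', l', k') \<Rightarrow> case j of (s, l, k) \<Rightarrow>
     if s' = s \<and> k' = k then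
       (if l' = l - 1 then alpha_minus q s l k
        else if l' = l then alpha_zero q s l k
        else if l' = l + 1 then alpha_plus q s l k else 0)
     else 0)"

definition A_mat :: "real \<Rightarrow> idx \<Rightarrow> idx \<Rightarrow> real" where
  "A_mat q i j = ((if i = j then 1 else 0) - x0_mat q i j) / (1 + q\<^sup>2)"

text \<open>M = L^2 K^2, diagonal with eigenvalue q^(2l+2k).\<close>
definition M_mat :: "real \<Rightarrow> idx \<Rightarrow> idx \<Rightarrow> real" where
  "M_mat q i j = (if i = j then (case j of (s, l, k) \<Rightarrow> q powr (2*l + 2*k)) else 0)"

text \<open>A0 = (A - M) L^(-1), with L^(-1) diagonal with eigenvalue q^(-l).\<close>
definition A0_mat :: "real \<Rightarrow> idx \<Rightarrow> idx \<Rightarrow> real" where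
  "A0_mat q i j = (A_mat q i j - M_mat q i j) * q powr (- lev j)"

definition mat_apply :: "(idx \<Rightarrow> idx \<Rightarrow> real) \<Rightarrow> (idx \<Rightarrow> complex) \<Rightarrow> idx \<Rightarrow> complex" where
  "mat_apply a v i = (\<Sum>j\<in>{j. v j \<noteq> 0}. complex_of_real (a i j) * v j)"

end

theory Submission
  imports Defs
begin

(* The matrix of x0, hence of A and of A0, is tridiagonal in the level l: it only connects
   v^l_(k,s) with v^(l-1)_(k,s), v^l_(k,s) and v^(l+1)_(k,s).  A tridiagonal matrix with
   uniformly bounded entries is bounded (Cauchy-Schwarz on the three terms of each row, plus
   injectivity of the level shifts), so the proof reduces to a uniform bound on the entries.

   Off the diagonal, the coefficient alpha^-(L,k) decays like q^L, which compensates the factor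
   q^(-l) of L^(-1).  On the diagonal the entry of A is of size 1 while the factor q^(-l) is
   unbounded; here the closed forms of alpha^0 and beta show that the diagonal entry of A - M
   carries a factor q^(2l), which makes the diagonal entry of A0 of size q^l. *)

lemma qnum_power:
  assumes "0 < q" and "q powr x = y"
  shows "qnum q x = (y - 1/y) / (q - 1/q)"
  using assms by (simp add: qnum_def powr_minus_divide)

lemma qnum_scaled:
  assumes q: "0 < q" "q < 1"
  shows "qnum q x = q / (1 - q^2) * (q powr (-x) - q powr x)"
proof -
  have "q^2 < 1" using q by (simp add: power_less_one_iff)
  then show ?thesis using q by (simp add: qnum_def field_simps power2_eq_square)
qed

lemma qnum_upper:
  assumes q: "0 < q" "q < 1" and x: "0 \<le> x"
  shows "0 \<le> qnum q x" and "qnum q x \<le> q / (1 - q^2) * q powr (-x)"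
proof -
  have g: "0 < q / (1 - q^2)" using q by (simp add: power_less_one_iff)
  have "q powr x \<le> q powr (-x)" using q x by (intro powr_mono') auto
  then show "0 \<le> qnum q x"
    unfolding qnum_scaled[OF q] using g by (intro mult_nonneg_nonneg) auto
  show "qnum q x \<le> q / (1 - q^2) * q powr (-x)"
    unfolding qnum_scaled[OF q] using g by (intro mult_left_mono) auto
qed

lemma qnum_lower:
  assumes q: "0 < q" "q < 1" and x: "1/2 \<le> x"
  shows "q / (1 - q^2) * (1 - q) * q powr (-x) \<le> qnum q x"
proof -
  have g: "0 < q / (1 - q^2)" using q by (simp add: power_less_one_iff)
  have "q powr x = q powr (2*x) * q powr (-x)" by (simp flip: powr_add)
  also have "\<dots> \<le> q * q powr (-x)"
    using q x powr_mono'[of 1 "2*x" q] by (intro mult_right_mono) auto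
  finally have "(1 - q) * q powr (-x) \<le> q powr (-x) - q powr x" by (simp add: algebra_simps)
  then show ?thesis
    unfolding qnum_scaled[OF q] mult.assoc using g by (intro mult_left_mono) auto
qed

lemma alpha_minus_numerator_le:
  assumes q: "0 < q" "q < 1" and kL: "1 \<le> L - k" "1 \<le> L + k"
  shows "qnum q (L - k) * qnum q (L + k) * qnum q (L - 1/2) * qnum q (L + 1/2)
           \<le> (q / (1 - q^2))^4 * q powr (-4*L)"
proof -
  define g where "g = q / (1 - q^2)"
  have g0: "0 < g" using q by (simp add: g_def power_less_one_iff)
  note up = qnum_upper[OF q, folded g_def]
  have "qnum q (L - k) * qnum q (L + k) * qnum q (L - 1/2) * qnum q (L + 1/2)
      \<le> (g * q powr (-(L - k))) * (g * q powr (-(L + k)))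
            * (g * q powr (-(L - 1/2))) * (g * q powr (-(L + 1/2)))"
    using up(2)[of "L - k"] up(2)[of "L + k"] up(2)[of "L - 1/2"] up(2)[of "L + 1/2"] up(1) kL g0
    by (intro mult_mono) (auto intro!: mult_nonneg_nonneg)
  also have "\<dots> = g^4 * q powr (-4*L)"
    by (simp add: power4_eq_xxxx mult_ac flip: powr_add)
  finally show ?thesis by (simp add: g_def)
qed

lemma alpha_minus_denominator_ge:
  assumes q: "0 < q" "q < 1" and L: "1 \<le> L"
  shows "(q / (1 - q^2) * (1 - q))^4 * q powr (-8*L)
           \<le> qnum q (2*L - 1) * (qnum q (2*L))^2 * qnum q (2*L + 1)"
proof -
  define g where "g = q / (1 - q^2)"
  have g0: "0 < g" using q by (simp add: g_def power_less_one_iff)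
  note low = qnum_lower[OF q, folded g_def]
  have "(g*(1 - q))^4 * q powr (-8*L)
      = (g*(1 - q) * q powr (-(2*L - 1))) * (g*(1 - q) * q powr (-(2*L)))^2
          * (g*(1 - q) * q powr (-(2*L + 1)))"
    by (simp add: power2_eq_square power4_eq_xxxx mult_ac flip: powr_add)
  also have "\<dots> \<le> qnum q (2*L - 1) * (qnum q (2*L))^2 * qnum q (2*L + 1)"
    using low[of "2*L - 1"] low[of "2*L"] low[of "2*L + 1"] qnum_upper(1)[OF q, of "2*L - 1"] L g0 q
    by (intro mult_mono power_mono) (auto intro!: mult_nonneg_nonneg)
  finally show ?thesis by (simp add: g_def)
qed

lemma alpha_minus_sq_bound:
  assumes q: "0 < q" "q < 1"
  shows "(alpha_minus q s L k)^2 \<le> (qnum q 2)^2 / (1 - q)^4 * q powr (2*L - 1)"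
proof (cases "\<bar>k\<bar> > L - 1")
  case True
  then show ?thesis using q by (simp add: alpha_minus_def)
next
  case False
  define g where "g = q / (1 - q^2)"
  have g0: "0 < g" using q by (simp add: g_def power_less_one_iff)
  have kL: "1 \<le> L - k" "1 \<le> L + k" using False by auto
  define N where "N = qnum q (L - k) * qnum q (L + k) * qnum q (L - 1/2) * qnum q (L + 1/2)"
  define D where "D = qnum q (2*L - 1) * (qnum q (2*L))^2 * qnum q (2*L + 1)"
  have N0: "0 \<le> N" unfolding N_def using qnum_upper(1)[OF q] kL by simp
  have N_le: "N \<le> g^4 * q powr (-4*L)"
    unfolding N_def g_def by (rule alpha_minus_numerator_le[OF q kL])
  have D_ge: "(g*(1 - q))^4 * q powr (-8*L) \<le> D"
    unfolding D_def g_def by (rule alpha_minus_denominator_ge[OF q]) (use kL in simp)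
  have D0: "0 < (g*(1 - q))^4 * q powr (-8*L)" using g0 q by simp
  have "(alpha_minus q s L k)^2 = q powr (2*k + sgn_of s) * (qnum q 2)^2 * N / D"
    using False qnum_upper(1)[OF q] kL q
    by (simp add: alpha_minus_def N_def D_def power_mult_distrib power_divide powr_powr
        mult.commute flip: powr_realpow)
  also have "\<dots> \<le> q powr (2*k + sgn_of s) * (qnum q 2)^2 * (g^4 * q powr (-4*L))
                    / ((g*(1 - q))^4 * q powr (-8*L))"
    using N_le N0 D_ge D0 q by (intro frac_le mult_left_mono) auto
  also have "\<dots> = (qnum q 2)^2 / (1 - q)^4 * q powr (2*k + sgn_of s + 4*L)"
    unfolding power_mult_distrib[of g "1 - q"] using g0 q by (simp add: field_simps flip: powr_add)
  also have "\<dots> \<le> (qnum q 2)^2 / (1 - q)^4 * q powr (2*L - 1)"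
    using q kL by (intro mult_left_mono powr_mono') (auto simp: sgn_of_def)
  finally show ?thesis .
qed

lemma alpha_zero_factor_closed_form:
  assumes q: "0 < q" "q < 1" and l: "0 < l"
  shows "(qnum q (l - k + 1) * qnum q (l + k) - q\<^sup>2 * qnum q (l - k) * qnum q (l + k + 1)) / qnum q (2*l)
     = (q^2 * (q powr l)^4 - (1 + q^2) * (q powr l)^2 * (q powr k)^2 + 1) / (1 - (q powr l)^4)"
proof -
  define t where "t = q powr l"
  define u where "u = q powr k"
  define c where "c = q - 1/q"
  have t0: "0 < t" and u0: "0 < u" using q by (auto simp: t_def u_def)
  have t1: "t < 1" using powr_less_mono'[OF q l] q unfolding t_def by simp
  have c0: "c \<noteq> 0" and cq: "(1 - q^2) / c = -q"
    using q mult_strict_mono[of q 1 q 1] by (auto simp: c_def field_simps power2_eq_square)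
  have t4: "t^4 < 1" using t0 t1 by (simp add: power_less_one_iff)
  have p: "q powr (l - k + 1) = t*q/u" "q powr (l + k) = t*u" "q powr (l - k) = t/u"
      "q powr (l + k + 1) = t*u*q" "q powr (2*l) = t^2"
    using q by (simp_all add: t_def u_def powr_add powr_diff powr_realpow[symmetric] powr_powr mult.commute)
  note qp = qnum_power[OF q(1), folded c_def]
  have num: "qnum q (l - k + 1) * qnum q (l + k) - q\<^sup>2 * qnum q (l - k) * qnum q (l + k + 1)
      = (1 - q^2) * (q*t^2 + 1/(q*t^2) - (1 + q^2)*u^2/q) / c^2"
    unfolding qp[OF p(1)] qp[OF p(2)] qp[OF p(3)] qp[OF p(4)]
    using t0 u0 q c0 by (simp add: field_simps power2_eq_square)
  have "(qnum q (l - k + 1) * qnum q (l + k) - q\<^sup>2 * qnum q (l - k) * qnum q (l + k + 1)) / qnum q (2*l)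
      = (1 - q^2) / c * (q*t^2 + 1/(q*t^2) - (1 + q^2)*u^2/q) / (t^2 - 1/t^2)"
    unfolding num qp[OF p(5)] using c0 by (simp add: power2_eq_square)
  also have "\<dots> = (q^2 * t^4 - (1 + q^2) * t^2 * u^2 + 1) / (1 - t^4)"
    unfolding cq using t0 t4 q by (simp add: field_simps power2_eq_square power4_eq_xxxx)
  finally show ?thesis unfolding t_def u_def .
qed

lemma beta_closed_form:
  assumes q: "0 < q" "q < 1" and l: "0 < l"
  shows "beta q s l = (1 + q^2 * (q powr l)^4 - (if s then 1 + q^2 else 1 + 1/q^2) * q * (q powr l)^2)
              / (1 - q^4 * (q powr l)^4)"
proof -
  define t where "t = q powr l"
  define r where "r = q powr (1/2)"
  define c where "c = q - 1/q"
  define d where "d = (if s then 1 + q^2 else 1 + 1/q^2)"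
  have t0: "t > 0" and r0: "r > 0" using q by (auto simp: t_def r_def)
  have t1: "t < 1" using powr_less_mono'[OF q l] q unfolding t_def by simp
  have rr: "r * r = q" using q by (simp add: r_def flip: powr_add)
  have c0: "c \<noteq> 0" using q mult_strict_mono[of q 1 q 1] by (auto simp: c_def field_simps)
  have "t * q < 1" using t0 t1 q mult_strict_mono[of t 1 q 1] by simp
  then have tq: "t^4 * q^4 < 1" using t0 q by (simp add: power_less_one_iff flip: power_mult_distrib)
  have p: "q powr (1/2) = r" "q powr (3/2) = q * r" "q powr l = t" "q powr (l + 1) = t * q"
      "q powr (2*l + 2) = t^2 * q^2"
  proof -
    have "q powr (3/2) = q powr (1 + 1/2)" by simp
    also have "\<dots> = q powr 1 * q powr (1/2)" by (rule powr_add)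
    finally show "q powr (3/2) = q * r" using q by (simp add: r_def)
    have "t^2 = q powr (2*l)" using q by (simp add: t_def powr_power)
    then show "q powr (2*l + 2) = t^2 * q^2"
      using q by (simp add: powr_add)
  qed (use q in \<open>simp_all add: r_def t_def powr_add\<close>)
  note qp = qnum_power[OF q(1), folded c_def]
  have sign: "sgn_of s * q powr (- sgn_of s) * c = d - q^2 - 1/q^2"
    using q by (cases s) (simp_all add: sgn_of_def d_def c_def powr_minus_divide field_simps power2_eq_square)
  have num: "sgn_of s * q powr (- sgn_of s)
      + c * (qnum q (1/2) * qnum q (3/2) - qnum q l * qnum q (l + 1)) = (d - t^2*q - 1/(t^2*q)) / c"
  proof -
    have sg: "sgn_of s * q powr (- sgn_of s) = (d - q^2 - 1/q^2) / c" using sign c0 by (simp add: field_simps)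
    show ?thesis unfolding sg qp[OF p(1)] qp[OF p(2)] qp[OF p(3)] qp[OF p(4)]
      using c0 q r0 t0 rr by (simp add: field_simps power2_eq_square)
  qed
  have "beta q s l = ((d - t^2*q - 1/(t^2*q)) / c) / (q * ((t^2 * q^2 - 1/(t^2 * q^2)) / c))"
    unfolding beta_def c_def[symmetric] num qp[OF p(5)] ..
  also have "\<dots> = (1 + q^2 * t^4 - d * q * t^2) / (1 - q^4 * t^4)"
    using c0 q t0 tq by (simp add: field_simps power2_eq_square power4_eq_xxxx)
  finally show ?thesis unfolding t_def d_def .
qed

text \<open>The numerator left over after the cancellation in the diagonal entry; P and X stand for
  q^(2l) and q^(2l+2k), d for the sign-dependent constant in the closed form of beta.\<close>
definition diag_numerator :: "real \<Rightarrow> real \<Rightarrow> real \<Rightarrow> real \<Rightarrow> real" where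
  "diag_numerator q d P X = - ((1 + q^2)^2 * P) + d*q*(1 + q^2*P^2)
     + (1 + q^2)*P*X*(1 + q^2 + q^4 - q^4*P^2) - (1 + q^2)*d*q*X"

text \<open>The cancellation behind the lemma: with alpha^0 in closed form, the diagonal entry of
  (A - M) has the factor P = q^(2l), which absorbs the unbounded factor q^(-l) of L^(-1).\<close>
lemma diag_entry_identity:
  fixes q P X d :: real
  assumes a: "1 - P^2 \<noteq> 0" and b: "1 - q^4*P^2 \<noteq> 0"
  shows "(1 - (q^2*P^2 - (1 + q^2)*X + 1)/(1 - P^2) * ((1 + q^2*P^2 - d*q*P)/(1 - q^4*P^2)))/(1 + q^2) - X
    = P * diag_numerator q d P X / ((1 + q^2) * ((1 - P^2)*(1 - q^4*P^2)))"
proof -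
  have e: "1 + q^2 \<noteq> 0" by (simp add: add_pos_nonneg order_less_imp_not_eq2)
  have combine: "(1 - N1/a * (N2/b))/e - X = (a*b - N1*N2 - X*e*(a*b))/(e*(a*b))"
    if "a \<noteq> 0" "b \<noteq> 0" "e \<noteq> 0" for a b e N1 N2 :: real
    using that by (simp add: field_simps)
  have "(1 - P^2)*(1 - q^4*P^2) - (q^2*P^2 - (1 + q^2)*X + 1) * (1 + q^2*P^2 - d*q*P)
          - X*(1 + q^2)*((1 - P^2)*(1 - q^4*P^2)) = P * diag_numerator q d P X"
    unfolding diag_numerator_def by algebra
  with combine[OF a b e] show ?thesis by simp
qed

definition diag_numerator_bound :: "real \<Rightarrow> real" where
  "diag_numerator_bound q = (1 + q^2) * ((1 + q^2) + 2*(q + 1/q) + (1 + q^2 + q^4))"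

lemma diag_numerator_le:
  fixes q P X d :: real
  assumes q: "0 < q" "q < 1" and P: "0 < P" "P \<le> 1" and X: "0 \<le> X" "X \<le> 1"
    and d: "0 < d" "d \<le> 1 + 1/q^2"
  shows "\<bar>diag_numerator q d P X\<bar> \<le> diag_numerator_bound q"
proof -
  have q2: "q^2 \<le> 1" and q4: "q^4 \<le> 1" using q by (auto simp: power_le_one)
  have P2: "P^2 \<le> 1" using P by (simp add: power_le_one)
  have dq: "0 \<le> d*q" "d*q \<le> q + 1/q" using q d mult_right_mono[OF d(2), of q]
    by (auto simp: field_simps power2_eq_square)
  have e: "0 < 1 + q^2" by (simp add: add_pos_nonneg)
  have t1: "(1 + q^2)^2 * P \<le> (1 + q^2)^2" "0 \<le> (1 + q^2)^2 * P" using P by (auto simp: mult_left_le)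
  have t2: "0 \<le> d*q*(1 + q^2*P^2)" "d*q*(1 + q^2*P^2) \<le> (q + 1/q)*(1 + q^2)"
    using dq q2 P2 mult_left_le[OF P2, of "q^2"] by (auto intro!: mult_mono)
  have "0 \<le> q^4*P^2" "q^4*P^2 \<le> q^4" "0 \<le> q^2"
    using mult_left_le[OF P2, of "q^4"] by auto
  then have R: "0 \<le> 1 + q^2 + q^4 - q^4*P^2" "1 + q^2 + q^4 - q^4*P^2 \<le> 1 + q^2 + q^4"
    by linarith+
  have PX: "0 \<le> P*X" "P*X \<le> 1" using P X mult_le_one[of P X] by auto
  have "P*X*(1 + q^2 + q^4 - q^4*P^2) \<le> 1 * (1 + q^2 + q^4)"
    using PX R by (intro mult_mono) auto
  then have t3: "0 \<le> (1 + q^2)*(P*X*(1 + q^2 + q^4 - q^4*P^2))"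
      "(1 + q^2)*(P*X*(1 + q^2 + q^4 - q^4*P^2)) \<le> (1 + q^2)*(1 + q^2 + q^4)"
    using PX R e by (auto intro!: mult_left_mono mult_nonneg_nonneg)
  have "d*q*X \<le> (q + 1/q) * 1" using dq X by (intro mult_mono) auto
  then have t4: "0 \<le> (1 + q^2)*(d*q*X)" "(1 + q^2)*(d*q*X) \<le> (1 + q^2)*(q + 1/q)"
    using dq X e by (auto intro!: mult_left_mono mult_nonneg_nonneg)
  have "diag_numerator q d P X = - ((1 + q^2)^2 * P) + d*q*(1 + q^2*P^2)
      + (1 + q^2)*(P*X*(1 + q^2 + q^4 - q^4*P^2)) - (1 + q^2)*(d*q*X)"
    unfolding diag_numerator_def by (simp add: mult.assoc)
  moreover have "diag_numerator_bound q = (1 + q^2)^2 + (q + 1/q)*(1 + q^2)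
      + (1 + q^2)*(1 + q^2 + q^4) + (1 + q^2)*(q + 1/q)"
    unfolding diag_numerator_bound_def using q by (simp add: power2_eq_square field_simps)
  ultimately show ?thesis using t1 t2 t3 t4 by (simp only: abs_le_iff) linarith
qed

definition diag_const :: "real \<Rightarrow> real" where
  "diag_const q = diag_numerator_bound q / ((1 + q^2) * (1 - q^2)^2)"

lemma diag_entry_bound:
  assumes q: "0 < q" "q < 1" and l: "1/2 \<le> l" and k: "-l \<le> k"
  shows "\<bar>((1 - alpha_zero q s l k)/(1 + q^2) - q powr (2*l + 2*k)) * q powr (-l)\<bar> \<le> diag_const q"
proof -
  define t where "t = q powr l"
  define P where "P = t^2"
  define X where "X = P * (q powr k)^2"
  define d where "d = (if s then 1 + q^2 else 1 + 1/q^2)"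
  have l0: "0 < l" using l by simp
  have t0: "0 < t" and t1: "t \<le> 1" using q l0 by (auto simp: t_def powr_le1)
  have P0: "0 < P" using t0 by (simp add: P_def)
  have Pq: "P \<le> q" unfolding P_def t_def using q l by (simp add: powr_power powr_le_one_le)
  have X_eq: "X = q powr (2*l + 2*k)" using q by (simp add: X_def P_def t_def powr_power powr_add)
  have X0: "0 \<le> X" and X1: "X \<le> 1" using q k by (auto simp: X_eq powr_le1)
  have q2: "q^2 < 1" using q by (simp add: power_less_one_iff)
  have P2: "P^2 \<le> q^2" using Pq P0 by (simp add: power_mono)
  have qP: "q^4*P^2 \<le> q^2"
    using P2 q mult_right_mono[of "q^4" 1 "P^2"] by (simp add: power_le_one)
  have d: "0 < d" "d \<le> 1 + 1/q^2"
    using q q2 by (auto simp: d_def add_pos_nonneg field_simps power_le_one)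
  have alpha0: "alpha_zero q s l k
      = (q^2*P^2 - (1 + q^2)*X + 1)/(1 - P^2) * ((1 + q^2*P^2 - d*q*P)/(1 - q^4*P^2))"
    unfolding alpha_zero_def alpha_zero_factor_closed_form[OF q l0] beta_closed_form[OF q l0]
      t_def[symmetric] d_def P_def X_def
    by (simp add: power2_eq_square power4_eq_xxxx mult_ac)
  define Den where "Den = (1 + q^2) * ((1 - P^2)*(1 - q^4*P^2))"
  have Den_ge: "(1 + q^2) * (1 - q^2)^2 \<le> Den"
    unfolding Den_def power2_eq_square[of "1 - q^2"] using P2 qP q2
    by (intro mult_left_mono mult_mono) auto
  have Den0: "0 < (1 + q^2) * (1 - q^2)^2" using q2 by (simp add: add_pos_nonneg)
  have "(1 - alpha_zero q s l k)/(1 + q^2) - q powr (2*l + 2*k) = P * diag_numerator q d P X / Den"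
    unfolding alpha0 X_eq[symmetric] Den_def
    by (rule diag_entry_identity) (use P2 qP q2 in auto)
  moreover have "q powr (-l) = 1 / t" using q by (simp add: t_def powr_minus_divide)
  ultimately have "\<bar>((1 - alpha_zero q s l k)/(1 + q^2) - q powr (2*l + 2*k)) * q powr (-l)\<bar>
      = \<bar>P * diag_numerator q d P X / Den / t\<bar>"
    by simp
  also have "\<dots> = t * \<bar>diag_numerator q d P X\<bar> / Den"
    using t0 Den0 Den_ge by (simp add: P_def power2_eq_square abs_mult)
  also have "\<dots> \<le> 1 * diag_numerator_bound q / ((1 + q^2) * (1 - q^2)^2)"
    using t0 t1 Den0 Den_ge diag_numerator_le[OF q P0 _ X0 X1 d] Pq q
    by (intro frac_le mult_mono) auto
  finally show ?thesis by (simp add: diag_const_def)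
qed

text \<open>An off-diagonal entry of A0 in column l is -alpha^-(L,k) q^(-l)/(1+q^2) with L = l or
  L = l + 1; its square is bounded uniformly by this constant.\<close>
definition offdiag_const :: "real \<Rightarrow> real" where
  "offdiag_const q = (qnum q 2)^2 / (1 - q)^4 * q powr (-1)"

lemma offdiag_entry_bound:
  assumes q: "0 < q" "q < 1" and L: "l \<le> L"
  shows "(alpha_minus q s L k / (1 + q^2) * q powr (-l))^2 \<le> offdiag_const q"
proof -
  define K where "K = (qnum q 2)^2 / (1 - q)^4"
  have K0: "0 \<le> K" by (simp add: K_def)
  have e: "1 \<le> (1 + q^2)^2" using q by (simp add: power2_eq_square algebra_simps)
  have "(alpha_minus q s L k / (1 + q^2) * q powr (-l))^2
      = (alpha_minus q s L k)^2 / (1 + q^2)^2 * q powr (-2*l)"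
    using q by (simp add: power_mult_distrib power_divide powr_power)
  also have "\<dots> \<le> (alpha_minus q s L k)^2 * q powr (-2*l)"
    using e by (intro mult_right_mono) (auto simp: divide_le_eq mult_le_cancel_left1)
  also have "\<dots> \<le> K * q powr (2*L - 1) * q powr (-2*l)"
    using alpha_minus_sq_bound[OF q, of s L k] by (intro mult_right_mono) (auto simp: K_def)
  also have "\<dots> = K * q powr (2*(L - l) - 1)" by (simp add: mult.assoc algebra_simps flip: powr_add)
  also have "\<dots> \<le> K * q powr (-1)" using q L K0 by (intro mult_left_mono powr_mono') auto
  finally show ?thesis by (simp add: offdiag_const_def K_def)
qed

definition entry_const :: "real \<Rightarrow> real" where
  "entry_const q = offdiag_const q + (diag_const q)^2"

lemma A0_entry_bound:
  assumes q: "0 < q" "q < 1" and j: "valid_idx j"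
  shows "(A0_mat q i j)^2 \<le> entry_const q"
proof -
  obtain s l k where j_eq: "j = (s, l, k)" by (cases j) auto
  obtain s' l' k' where i_eq: "i = (s', l', k')" by (cases i) auto
  have l: "1/2 \<le> l" and k: "-l \<le> k" using j by (auto simp: j_eq valid_idx_def)
  have off0: "0 \<le> offdiag_const q" using q by (simp add: offdiag_const_def)
  note defs = i_eq j_eq A0_mat_def A_mat_def M_mat_def x0_mat_def lev_def
  consider (below) "s' = s \<and> k' = k \<and> l' = l - 1" | (diag) "s' = s \<and> k' = k \<and> l' = l"
    | (above) "s' = s \<and> k' = k \<and> l' = l + 1"
    | (far) "\<not> (s' = s \<and> k' = k \<and> (l' = l - 1 \<or> l' = l \<or> l' = l + 1))" by blast
  then show ?thesis
  proof cases
    case below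
    then have "(A0_mat q i j)^2 = (alpha_minus q s l k / (1 + q^2) * q powr (-l))^2"
      by (simp add: defs power2_eq_square)
    with offdiag_entry_bound[OF q order_refl] show ?thesis
      by (simp add: entry_const_def add_increasing2)
  next
    case above
    then have "(A0_mat q i j)^2 = (alpha_minus q s (l + 1) k / (1 + q^2) * q powr (-l))^2"
      by (simp add: defs alpha_plus_def power2_eq_square)
    with offdiag_entry_bound[OF q, of l "l + 1"] show ?thesis
      by (simp add: entry_const_def add_increasing2)
  next
    case diag
    then have "A0_mat q i j = ((1 - alpha_zero q s l k)/(1 + q^2) - q powr (2*l + 2*k)) * q powr (-l)"
      by (simp add: defs diff_divide_distrib)
    then have "\<bar>A0_mat q i j\<bar> \<le> diag_const q" using diag_entry_bound[OF q l k] by simp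
    then have "(A0_mat q i j)^2 \<le> (diag_const q)^2"
      by (metis abs_ge_zero order_trans power2_abs power_mono)
    then show ?thesis using off0 by (simp add: entry_const_def)
  next
    case far
    then have "A0_mat q i j = 0" by (auto simp: defs)
    then show ?thesis using off0 by (simp add: entry_const_def)
  qed
qed

definition shift_level :: "real \<Rightarrow> idx \<Rightarrow> idx" where
  "shift_level d i = (case i of (s, l, k) \<Rightarrow> (s, l + d, k))"

lemma inj_shift_level: "inj (shift_level d)"
  by (auto simp: inj_def shift_level_def split: prod.splits)

lemma shift_level_distinct:
  "shift_level 1 i \<noteq> i" "shift_level (-1) i \<noteq> i" "shift_level 1 i \<noteq> shift_level (-1) i"
  by (auto simp: shift_level_def split: prod.splits)

lemma A0_tridiagonal:
  assumes "j \<notin> {shift_level 1 i, i, shift_level (-1) i}"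
  shows "A0_mat q i j = 0"
proof -
  obtain s l k where j: "j = (s, l, k)" by (cases j) auto
  obtain s' l' k' where i: "i = (s', l', k')" by (cases i) auto
  have "\<not> (s' = s \<and> k' = k \<and> (l' = l - 1 \<or> l' = l \<or> l' = l + 1))"
    using assms by (auto simp: i j shift_level_def)
  then show ?thesis by (auto simp: i j A0_mat_def A_mat_def M_mat_def x0_mat_def)
qed

lemma tridiagonal_apply:
  fixes a :: "idx \<Rightarrow> idx \<Rightarrow> real"
  assumes band: "\<And>j. j \<notin> {shift_level 1 i, i, shift_level (-1) i} \<Longrightarrow> a i j = 0"
    and fin: "finite {j. v j \<noteq> 0}"
  shows "mat_apply a v i =
     complex_of_real (a i (shift_level 1 i)) * v (shift_level 1 i) + complex_of_real (a i i) * v i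
     + complex_of_real (a i (shift_level (-1) i)) * v (shift_level (-1) i)"
proof -
  define f where "f j = complex_of_real (a i j) * v j" for j
  define T where "T = {shift_level 1 i, i, shift_level (-1) i}"
  have "mat_apply a v i = sum f {j. v j \<noteq> 0}" by (simp add: mat_apply_def f_def)
  also have "\<dots> = sum f ({j. v j \<noteq> 0} \<union> T)"
    by (rule sum.mono_neutral_left) (use fin in \<open>auto simp: f_def T_def\<close>)
  also have "\<dots> = sum f T"
    by (rule sum.mono_neutral_right) (use fin band in \<open>auto simp: f_def T_def\<close>)
  also have "\<dots> = f (shift_level 1 i) + f i + f (shift_level (-1) i)"
    using shift_level_distinct[of i] by (simp add: T_def add.assoc)
  finally show ?thesis by (simp add: f_def)
qed

lemma norm_sum3_sq:
  fixes x y z :: "'a :: real_normed_vector"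
  shows "(norm (x + y + z))^2 \<le> 3 * ((norm x)^2 + (norm y)^2 + (norm z)^2)"
proof -
  have "norm (x + y + z) \<le> norm x + norm y + norm z"
    by (metis norm_triangle_ineq add_right_mono order_trans)
  then have "(norm (x + y + z))^2 \<le> (norm x + norm y + norm z)^2" by (simp add: power_mono)
  also have "\<dots> \<le> 3 * ((norm x)^2 + (norm y)^2 + (norm z)^2)"
    by (smt (verit) power2_diff power2_sum zero_le_power2)
  finally show ?thesis .
qed

text \<open>Since shifting is injective, a shifted finite sum of squares is dominated by the norm.\<close>
lemma shifted_sum_le:
  assumes fin: "finite {j. v j \<noteq> 0}" and S: "finite S"
  shows "(\<Sum>i\<in>S. (cmod (v (shift_level d i)))^2) \<le> (\<Sum>j\<in>{j. v j \<noteq> 0}. (cmod (v j))^2)"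
proof -
  define h where "h j = (cmod (v j))^2" for j
  have "(\<Sum>i\<in>S. h (shift_level d i)) = sum h (shift_level d ` S)"
    by (simp add: sum.reindex inj_on_subset[OF inj_shift_level])
  also have "\<dots> \<le> sum h (shift_level d ` S \<union> {j. v j \<noteq> 0})"
    by (rule sum_mono2) (use S fin in \<open>auto simp: h_def\<close>)
  also have "\<dots> = sum h {j. v j \<noteq> 0}"
    by (rule sum.mono_neutral_right) (use S fin in \<open>auto simp: h_def\<close>)
  finally show ?thesis by (simp add: h_def)
qed

lemma tridiagonal_bounded:
  fixes a :: "idx \<Rightarrow> idx \<Rightarrow> real"
  assumes band: "\<And>i j. j \<notin> {shift_level 1 i, i, shift_level (-1) i} \<Longrightarrow> a i j = 0"
    and entry: "\<And>i j. j \<in> D \<Longrightarrow> (a i j)^2 \<le> E" and E: "0 \<le> E"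
    and fin: "finite {j. v j \<noteq> 0}" and supp: "{j. v j \<noteq> 0} \<subseteq> D" and S: "finite S"
  shows "(\<Sum>i\<in>S. (cmod (mat_apply a v i))^2) \<le> 9 * E * (\<Sum>j\<in>{j. v j \<noteq> 0}. (cmod (v j))^2)"
proof -
  define N where "N = (\<Sum>j\<in>{j. v j \<noteq> 0}. (cmod (v j))^2)"
  define w where "w d i = (cmod (v (shift_level d i)))^2" for d i
  have shift0: "shift_level 0 i = i" for i by (simp add: shift_level_def split: prod.splits)
  have entry_term: "(cmod (complex_of_real (a i j) * v j))^2 \<le> E * (cmod (v j))^2" for i j
  proof (cases "v j = 0")
    case False
    then have "j \<in> D" using supp by auto
    then have "(a i j)^2 \<le> E" by (rule entry)
    then show ?thesis by (simp add: norm_mult power_mult_distrib mult_right_mono)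
  qed simp
  have "(\<Sum>i\<in>S. (cmod (mat_apply a v i))^2) \<le> (\<Sum>i\<in>S. 3 * E * (w 1 i + w 0 i + w (-1) i))"
  proof (rule sum_mono)
    fix i
    let ?x = "\<lambda>j. complex_of_real (a i j) * v j"
    have "mat_apply a v i = ?x (shift_level 1 i) + ?x i + ?x (shift_level (-1) i)"
      by (rule tridiagonal_apply) (use band fin in auto)
    then have "(cmod (mat_apply a v i))^2 = (cmod (?x (shift_level 1 i) + ?x i + ?x (shift_level (-1) i)))^2"
      by simp
    also have "\<dots> \<le> 3 * ((cmod (?x (shift_level 1 i)))^2 + (cmod (?x i))^2
                          + (cmod (?x (shift_level (-1) i)))^2)"
      by (rule norm_sum3_sq)
    also have "\<dots> \<le> 3 * (E * w 1 i + E * w 0 i + E * w (-1) i)"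
      unfolding w_def shift0 by (intro mult_left_mono add_mono entry_term) auto
    finally show "(cmod (mat_apply a v i))^2 \<le> 3 * E * (w 1 i + w 0 i + w (-1) i)"
      by (simp add: algebra_simps)
  qed
  also have "\<dots> = 3 * E * ((\<Sum>i\<in>S. w 1 i) + (\<Sum>i\<in>S. w 0 i) + (\<Sum>i\<in>S. w (-1) i))"
    by (simp add: sum.distrib flip: sum_distrib_left)
  also have "\<dots> \<le> 3 * E * (N + N + N)"
    using shifted_sum_le[OF fin S] E unfolding N_def w_def by (intro mult_left_mono add_mono) auto
  finally show ?thesis by (simp add: N_def)
qed

theorem lemma3p4:
  fixes q :: real
  assumes "0 < q" and "q < 1"
  shows "\<exists>C::real. \<forall>v :: idx \<Rightarrow> complex.
           finite {j. v j \<noteq> 0} \<and> {j. v j \<noteq> 0} \<subseteq> {j. valid_idx j} \<longrightarrow>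
           (\<forall>S. finite S \<and> S \<subseteq> {i. valid_idx i} \<longrightarrow>
              (\<Sum>i\<in>S. (cmod (mat_apply (A0_mat q) v i))\<^sup>2)
                \<le> C\<^sup>2 * (\<Sum>j\<in>{j. v j \<noteq> 0}. (cmod (v j))\<^sup>2))"
proof -
  have q: "0 < q" "q < 1" by fact+
  have E: "0 \<le> entry_const q" using q by (simp add: entry_const_def offdiag_const_def)
  have C: "(3 * sqrt (entry_const q))^2 = 9 * entry_const q" using E by (simp add: power_mult_distrib)
  show ?thesis
  proof (intro exI[of _ "3 * sqrt (entry_const q)"] allI impI, elim conjE)
    fix v :: "idx \<Rightarrow> complex" and S :: "idx set"
    assume fin: "finite {j. v j \<noteq> 0}" and supp: "{j. v j \<noteq> 0} \<subseteq> {j. valid_idx j}"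
      and S: "finite S"
    show "(\<Sum>i\<in>S. (cmod (mat_apply (A0_mat q) v i))\<^sup>2)
        \<le> (3 * sqrt (entry_const q))\<^sup>2 * (\<Sum>j\<in>{j. v j \<noteq> 0}. (cmod (v j))\<^sup>2)"
      unfolding C
      by (rule tridiagonal_bounded[OF A0_tridiagonal _ E fin supp S]) (use A0_entry_bound[OF q] in auto)
  qed
qed

end
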